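(* For every integer $n\ge1$, $M^L(n+2)\le 4K(n)$.
   Context: $\mathbb{F}=\{0,1\}$. The binary $n$-dimensional hypercube $\mathbb{F}^n$ is the graph on $\mathbb{F}^n$ where two words are adjacent iff their Hamming distance is $1$. For a nonempty $C\subseteq\mathbb{F}^n$, $I(\mathbf{x})=N[\mathbf{x}]\cap C$ with $N[\mathbf{x}]$ the words at Hamming distance $\le1$ from $\mathbf{x}$. $C$ is a covering code if $I(\mathbf{x})\ne\emptyset$ for all $\mathbf{x}\in\mathbb{F}^n$; $C$ is a local identifying code if it is covering and $I(\mathbf{x})\ne I(\mathbf{y})$ for all adjacent $\mathbf{x},\mathbf{y}$. $K(n)$ is the minimum cardinality of a covering code in $\mathbb{F}^n$, and $M^L(n)$ the minimum cardinality of a local identifying code in $\mathbb{F}^n$. *)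

theory Defs
  imports Main
begin

(* Binary words of length n: elements of F^n, F = {0,1}, represented as bool lists *)
definition words :: "nat \<Rightarrow> bool list set" where
  "words n = {x. length x = n}"

definition hamming :: "bool list \<Rightarrow> bool list \<Rightarrow> nat" where
  "hamming x y = length (filter (\<lambda>(a, b). a \<noteq> b) (zip x y))"

definition closed_nbhd :: "nat \<Rightarrow> bool list \<Rightarrow> bool list set" where
  "closed_nbhd n x = {y \<in> words n. hamming x y \<le> 1}"

definition I_set :: "nat \<Rightarrow> bool list set \<Rightarrow> bool list \<Rightarrow> bool list set" where
  "I_set n C x = closed_nbhd n x \<inter> C"

definition covering_code :: "nat \<Rightarrow> bool list set \<Rightarrow> bool" where
  "covering_code n C \<longleftrightarrow> C \<noteq> {} \<and> C \<subseteq> words n \<and>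
     (\<forall>x \<in> words n. I_set n C x \<noteq> {})"

definition local_identifying_code :: "nat \<Rightarrow> bool list set \<Rightarrow> bool" where
  "local_identifying_code n C \<longleftrightarrow> covering_code n C \<and>
     (\<forall>x \<in> words n. \<forall>y \<in> words n. hamming x y = 1 \<longrightarrow> I_set n C x \<noteq> I_set n C y)"

definition K :: "nat \<Rightarrow> nat" where
  "K n = (LEAST k. \<exists>C. covering_code n C \<and> card C = k)"

definition M_L :: "nat \<Rightarrow> nat" where
  "M_L n = (LEAST k. \<exists>C. local_identifying_code n C \<and> card C = k)"

end

theory Submission
  imports Defs
begin

text \<open>Let \<open>C\<close> be a covering code of \<open>\<bbbF>\<^sup>n\<close> and take \<open>C \<times> \<bbbF>\<^sup>m\<close> in \<open>\<bbbF>\<^sup>n\<^sup>+\<^sup>m\<close>, \<open>m \<ge> 2\<close>.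
  It covers, since \<open>c\<close> covering \<open>u\<close> gives \<open>cs\<close> covering \<open>us\<close>. Two neighbours differ either in the
  suffix or in the prefix. If \<open>us, ut\<close> differ in the suffix, they are separated by \<open>ur\<close> when
  \<open>u \<in> C\<close> (with \<open>r\<close> a neighbour of \<open>s\<close> at distance 2 from \<open>t\<close>), and otherwise by \<open>cs\<close> with
  \<open>c\<close> a code neighbour of \<open>u\<close>. If \<open>us, vs\<close> differ in the prefix, \<open>ur\<close> separates them when
  \<open>u \<in> C\<close>, symmetrically \<open>vr\<close>; otherwise a code neighbour \<open>c\<close> of \<open>u\<close> cannot also be a
  neighbour of \<open>v\<close>, because the three distances between \<open>u, v, c\<close> have even sum.\<close>

lemma hamming_Nil_left [simp]: "hamming [] y = 0"
  by (simp add: hamming_def)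

lemma hamming_Nil_right [simp]: "hamming x [] = 0"
  by (simp add: hamming_def)

lemma hamming_Cons [simp]: "hamming (a # x) (b # y) = (if a = b then 0 else 1) + hamming x y"
  by (simp add: hamming_def)

lemma hamming_self [simp]: "hamming x x = 0"
  by (induction x) auto

lemma hamming_commute: "hamming x y = hamming y x"
  by (induction x y rule: list_induct2') auto

lemma hamming_eq_0_iff: "length u = length v \<Longrightarrow> hamming u v = 0 \<longleftrightarrow> u = v"
  by (induction u v rule: list_induct2) auto

lemma hamming_append:
  "length u = length v \<Longrightarrow> hamming (u @ s) (v @ t) = hamming u v + hamming s t"
  by (induction u v rule: list_induct2) auto

lemma hamming_triangle_even:
  "length c = length u \<Longrightarrow> length u = length v \<Longrightarrow>
     even (hamming c u + hamming c v + hamming u v)"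
proof (induction c arbitrary: u v)
  case (Cons a c)
  then obtain b u' d v' where "u = b # u'" "v = d # v'"
    by (metis length_Suc_conv)
  with Cons show ?case by (cases a; cases b; cases d) auto
qed simp

lemma hamming_le_1_neq:
  "length a = length b \<Longrightarrow> hamming a b \<le> 1 \<Longrightarrow> a \<noteq> b \<Longrightarrow> hamming a b = 1"
  using hamming_eq_0_iff by fastforce

lemma words_neighbour:
  assumes "s \<in> words m" "m \<ge> 1"
  shows "\<exists>r \<in> words m. hamming s r = 1"
proof -
  obtain a s' where "s = a # s'"
    using assms by (cases s) (auto simp: words_def)
  then show ?thesis
    using assms by (intro bexI[of _ "(\<not> a) # s'"]) (auto simp: words_def)
qed

lemma words_neighbour_at_distance_2:
  assumes "s \<in> words m" "t \<in> words m" "hamming s t = 1" "m \<ge> 2"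
  shows "\<exists>r \<in> words m. hamming s r = 1 \<and> hamming t r = 2"
proof -
  obtain a b s' c d t' where s: "s = a # b # s'" and t: "t = c # d # t'"
    and len: "length s' = length t'"
    using assms by (cases s rule: remdups_adj.cases; cases t rule: remdups_adj.cases)
      (auto simp: words_def)
  show ?thesis
  proof (cases "a = c")
    case True
    with assms s t show ?thesis
      by (intro bexI[of _ "(\<not> a) # b # s'"])
        (auto simp: words_def hamming_commute[of t' s'] split: if_splits)
  next
    case False
    with assms s t have "b = d" "s' = t'"
      using hamming_eq_0_iff[OF len] by (auto split: if_splits)
    with False assms s t show ?thesis
      by (intro bexI[of _ "a # (\<not> b) # s'"]) (auto simp: words_def)
  qed
qed

lemma finite_words: "finite (words n)"
  using finite_lists_length_eq[of "UNIV :: bool set" n] by (simp add: words_def)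

lemma card_words: "card (words n) = 2 ^ n"
  using card_lists_length_eq[of "UNIV :: bool set" n] by (simp add: words_def)

lemma words_append_split:
  "x \<in> words (n + m) \<Longrightarrow> \<exists>u s. x = u @ s \<and> u \<in> words n \<and> s \<in> words m"
  by (intro exI[of _ "take n x"] exI[of _ "drop n x"]) (auto simp: words_def)

definition product_code :: "bool list set \<Rightarrow> bool list set \<Rightarrow> bool list set" where
  "product_code C D = (\<lambda>(c, r). c @ r) ` (C \<times> D)"

lemma product_code_subset_words:
  "C \<subseteq> words n \<Longrightarrow> D \<subseteq> words m \<Longrightarrow> product_code C D \<subseteq> words (n + m)"
  by (fastforce simp: product_code_def words_def)

lemma append_mem_product_code:
  assumes "C \<subseteq> words n" "c \<in> words n"
  shows "c @ r \<in> product_code C D \<longleftrightarrow> c \<in> C \<and> r \<in> D"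
  using assms by (force simp: product_code_def words_def append_eq_append_conv)

lemma card_product_code:
  assumes "C \<subseteq> words n" "finite D"
  shows "card (product_code C D) = card C * card D"
proof -
  have "inj_on (\<lambda>(c, r). c @ r) (C \<times> D)"
  proof (rule inj_onI, clarify)
    fix c r c' r' assume "c \<in> C" "c' \<in> C" "c @ r = c' @ r'"
    moreover from assms \<open>c \<in> C\<close> \<open>c' \<in> C\<close> have "length c = length c'"
      by (auto simp: words_def)
    ultimately show "c = c' \<and> r = r'"
      using append_eq_append_conv by blast
  qed
  then have "card (product_code C D) = card (C \<times> D)"
    unfolding product_code_def by (rule card_image)
  then show ?thesis
    by (simp add: card_cartesian_product)
qed

lemma append_mem_I_set_product_code:
  assumes "C \<subseteq> words n" "u \<in> words n" "s \<in> words m" "c \<in> words n" "r \<in> words m"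
  shows "c @ r \<in> I_set (n + m) (product_code C (words m)) (u @ s)
           \<longleftrightarrow> c \<in> C \<and> hamming u c + hamming s r \<le> 1"
proof -
  have "c @ r \<in> words (n + m)" "hamming (u @ s) (c @ r) = hamming u c + hamming s r"
    using assms by (auto simp: words_def hamming_append)
  then show ?thesis
    using assms append_mem_product_code[OF assms(1,4)]
    by (auto simp: I_set_def closed_nbhd_def)
qed

lemma covering_code_neighbour:
  assumes "covering_code n C" "u \<in> words n"
  obtains c where "c \<in> C" "c \<in> words n" "hamming u c \<le> 1"
  using assms by (auto simp: covering_code_def I_set_def closed_nbhd_def)

lemma covering_code_product_code:
  assumes "covering_code n C"
  shows "covering_code (n + m) (product_code C (words m))"
proof -
  have Cw: "C \<subseteq> words n" and "C \<noteq> {}"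
    using assms by (auto simp: covering_code_def)
  moreover have "words m \<noteq> {}"
    by (auto simp: words_def intro: exI[of _ "replicate m False"])
  moreover have "I_set (n + m) (product_code C (words m)) x \<noteq> {}" if xw: "x \<in> words (n + m)" for x
  proof -
    obtain u s where x: "x = u @ s" "u \<in> words n" "s \<in> words m"
      using words_append_split[OF xw] by blast
    obtain c where "c \<in> C" "c \<in> words n" "hamming u c \<le> 1"
      using covering_code_neighbour[OF assms x(2)] .
    then have "c @ s \<in> I_set (n + m) (product_code C (words m)) x"
      using append_mem_I_set_product_code[OF Cw x(2,3)] x(1,3) by simp
    then show ?thesis by blast
  qed
  moreover have "product_code C (words m) \<subseteq> words (n + m)"
    using product_code_subset_words[OF Cw] by blast
  ultimately show ?thesis
    by (auto simp: covering_code_def product_code_def)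
qed

context
  fixes n m :: nat and C :: "bool list set"
  assumes cover: "covering_code n C"
begin

private abbreviation "I \<equiv> I_set (n + m) (product_code C (words m))"

private lemma code_in_words: "C \<subseteq> words n"
  using cover by (simp add: covering_code_def)

lemma product_code_separates_suffix_neighbours:
  assumes "m \<ge> 2" "u \<in> words n" "s \<in> words m" "t \<in> words m" "hamming s t = 1"
  shows "I (u @ s) \<noteq> I (u @ t)"
proof (cases "u \<in> C")
  case True
  obtain r where "r \<in> words m" "hamming s r = 1" "hamming t r = 2"
    using words_neighbour_at_distance_2[OF assms(3-5,1)] by blast
  then have "u @ r \<in> I (u @ s)" "u @ r \<notin> I (u @ t)"
    using True append_mem_I_set_product_code[OF code_in_words assms(2)] assms by auto
  then show ?thesis by blast
next
  case False
  obtain c where c: "c \<in> C" "c \<in> words n" "hamming u c \<le> 1"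
    using covering_code_neighbour[OF cover assms(2)] .
  with False have "hamming u c = 1"
    using hamming_le_1_neq[of u c] assms(2) by (auto simp: words_def)
  then have "c @ s \<in> I (u @ s)" "c @ s \<notin> I (u @ t)"
    using c append_mem_I_set_product_code[OF code_in_words assms(2)] assms
    by (auto simp: hamming_commute[of t s])
  then show ?thesis by blast
qed

private lemma prefix_neighbour_separated_one_way:
  assumes "m \<ge> 1" "u \<in> words n" "v \<in> words n" "s \<in> words m" "hamming u v = 1"
    and "u \<in> C \<or> v \<notin> C"
  shows "\<exists>z. z \<in> I (u @ s) \<and> z \<notin> I (v @ s)"
proof (cases "u \<in> C")
  case True
  obtain r where "r \<in> words m" "hamming s r = 1"
    using words_neighbour[OF assms(4,1)] by blast
  then have "u @ r \<in> I (u @ s)" "u @ r \<notin> I (v @ s)"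
    using True append_mem_I_set_product_code[OF code_in_words] assms
    by (auto simp: hamming_commute[of v u])
  then show ?thesis by blast
next
  case False
  with assms have "v \<notin> C" by blast
  obtain c where c: "c \<in> C" "c \<in> words n" "hamming u c \<le> 1"
    using covering_code_neighbour[OF cover assms(2)] .
  have lens: "length c = length u" "length u = length v" "length c = length v"
    using c assms by (auto simp: words_def)
  from c False have "c \<noteq> u" by blast
  with c have "hamming u c = 1"
    using hamming_le_1_neq lens by auto
  moreover have "\<not> hamming v c \<le> 1"
  proof
    assume "hamming v c \<le> 1"
    moreover from c \<open>v \<notin> C\<close> have "v \<noteq> c" by blast
    ultimately have "hamming v c = 1"
      using hamming_le_1_neq lens by auto
    with \<open>hamming u c = 1\<close> assms(5) show False
      using hamming_triangle_even[OF lens(1,2)] by (simp add: hamming_commute[of c])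
  qed
  ultimately have "c @ s \<in> I (u @ s)" "c @ s \<notin> I (v @ s)"
    using c append_mem_I_set_product_code[OF code_in_words] assms by auto
  then show ?thesis by blast
qed

lemma product_code_separates_prefix_neighbours:
  assumes "m \<ge> 1" "u \<in> words n" "v \<in> words n" "s \<in> words m" "hamming u v = 1"
  shows "I (u @ s) \<noteq> I (v @ s)"
proof (cases "u \<in> C \<or> v \<notin> C")
  case True
  then show ?thesis
    using prefix_neighbour_separated_one_way[OF assms] by blast
next
  case False
  then show ?thesis
    using prefix_neighbour_separated_one_way[OF assms(1,3,2,4)] assms(5)
    by (metis hamming_commute)
qed

lemma local_identifying_code_product_code:
  assumes "m \<ge> 2"
  shows "local_identifying_code (n + m) (product_code C (words m))"
  unfolding local_identifying_code_def
proof (intro conjI ballI impI)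
  show "covering_code (n + m) (product_code C (words m))"
    using covering_code_product_code[OF cover] .
next
  fix x y
  assume "x \<in> words (n + m)" "y \<in> words (n + m)" "hamming x y = 1"
  then obtain u s v t where x: "x = u @ s" "u \<in> words n" "s \<in> words m"
    and y: "y = v @ t" "v \<in> words n" "t \<in> words m" and xy: "hamming x y = 1"
    using words_append_split by meson
  have lens: "length u = length v" "length s = length t"
    using x y by (auto simp: words_def)
  have split: "hamming u v + hamming s t = 1"
    using xy x(1) y(1) hamming_append[OF lens(1)] by simp
  show "I x \<noteq> I y"
  proof (cases "hamming u v = 0")
    case True
    then show ?thesis
      using split x y hamming_eq_0_iff[OF lens(1)] assms
        product_code_separates_suffix_neighbours by auto
  next
    case False
    then show ?thesis
      using split x y hamming_eq_0_iff[OF lens(2)] assms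
        product_code_separates_prefix_neighbours by auto
  qed
qed

end

lemma K_attained: "\<exists>C. covering_code n C \<and> card C = K n"
proof -
  have "covering_code n (words n)"
    by (auto simp: covering_code_def I_set_def closed_nbhd_def words_def
        intro!: exI[of _ "replicate n False"])
  then have "\<exists>k C. covering_code n C \<and> card C = k"
    by blast
  then show ?thesis
    unfolding K_def by (rule LeastI_ex)
qed

lemma M_L_le_card: "local_identifying_code n C \<Longrightarrow> M_L n \<le> card C"
  unfolding M_L_def by (rule Least_le) blast

lemma M_L_add_le_K:
  assumes "m \<ge> 2"
  shows "M_L (n + m) \<le> 2 ^ m * K n"
proof -
  obtain C where C: "covering_code n C" "card C = K n"
    using K_attained by blast
  then have "card (product_code C (words m)) = 2 ^ m * K n"
    using card_product_code[of C n "words m"]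
    by (simp add: covering_code_def finite_words card_words)
  with M_L_le_card local_identifying_code_product_code[OF C(1) assms] show ?thesis
    by metis
qed

theorem mainTheorem8:
  fixes n :: nat
  assumes "n \<ge> 1"
  shows "M_L (n + 2) \<le> 4 * K n"
  using M_L_add_le_K[of 2 n] by simp

end
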